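(* Let $X\sim\mathbb{P}$ be data in a sample space $\mathcal{X}$, let $G$ be a compact topological group acting on $\mathcal{X}$ with Haar probability measure $\mathbb{Q}$, and assume exact invariance: for $\mathbb{Q}$-almost all $g$, $gX$ has the same distribution as $X$. Let $\hat\theta(X)\in\mathbb{R}^p$ be an estimator of a parameter $\theta_0\in\mathbb{R}^p$ such that $(x,g)\mapsto\hat\theta(gx)$ belongs to $L^2(\mathbb{P}\times\mathbb{Q})$, and let $\hat\theta_G(X)=\mathbb{E}_{g\sim\mathbb{Q}}\hat\theta(gX)$ be its augmented version. Then the bias of $\hat\theta_G(X)$ equals the bias of $\hat\theta(X)$, and the covariance matrices satisfy $\mathrm{Cov}(\hat\theta_G(X))\preceq\mathrm{Cov}(\hat\theta(X))$ in the Loewner order; hence the mean squared error $\mathbb{E}\|\hat\theta_G(X)-\theta_0\|_2^2$ is at most $\mathbb{E}\|\hat\theta(X)-\theta_0\|_2^2$. Moreover, for any loss function $L(\theta_0,\cdot)$ that is convex, $\mathbb{E}L(\theta_0,\hat\theta(X))\ge\mathbb{E}L(\theta_0,\hat\theta_G(X))$.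
   Context: The bias of an estimator $T(X)$ of $\theta_0$ is $\mathbb{E}T(X)-\theta_0$. The Haar probability measure $\mathbb{Q}$ is invariant under left and right translations by elements of $G$. *)

theory Defs
  imports "HOL-Probability.Probability" "HOL-Algebra.Group"
begin

definition borel_of :: "'a topology \<Rightarrow> 'a measure" where
  "borel_of T = sigma (topspace T) {U. openin T U}"

definition compact_topological_group :: "('g, 'b) monoid_scheme \<Rightarrow> 'g topology \<Rightarrow> bool" where
  "compact_topological_group G T \<longleftrightarrow>
     group G \<and> topspace T = carrier G \<and> compact_space T \<and>
     continuous_map (prod_topology T T) T (\<lambda>(a, b). a \<otimes>\<^bsub>G\<^esub> b) \<and>
     continuous_map T T (\<lambda>a. inv\<^bsub>G\<^esub> a)"

definition haar_probability :: "('g, 'b) monoid_scheme \<Rightarrow> 'g topology \<Rightarrow> 'g measure \<Rightarrow> bool" where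
  "haar_probability G T Q \<longleftrightarrow>
     prob_space Q \<and> sets Q = sets (borel_of T) \<and> space Q = carrier G \<and>
     (\<forall>g\<in>carrier G. distr Q Q (\<lambda>h. g \<otimes>\<^bsub>G\<^esub> h) = Q) \<and>
     (\<forall>g\<in>carrier G. distr Q Q (\<lambda>h. h \<otimes>\<^bsub>G\<^esub> g) = Q)"

definition measurable_group_action ::
  "('g, 'b) monoid_scheme \<Rightarrow> 'g measure \<Rightarrow> 'x measure \<Rightarrow> ('g \<Rightarrow> 'x \<Rightarrow> 'x) \<Rightarrow> bool" where
  "measurable_group_action G Q P act \<longleftrightarrow>
     (\<lambda>(g, x). act g x) \<in> measurable (Q \<Otimes>\<^sub>M P) P \<and>
     (\<forall>x\<in>space P. act \<one>\<^bsub>G\<^esub> x = x) \<and>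
     (\<forall>g\<in>carrier G. \<forall>h\<in>carrier G. \<forall>x\<in>space P. act (g \<otimes>\<^bsub>G\<^esub> h) x = act g (act h x))"

definition mean_vec :: "'x measure \<Rightarrow> ('x \<Rightarrow> real ^ 'p) \<Rightarrow> real ^ 'p" where
  "mean_vec P X = integral\<^sup>L P X"

definition cov_matrix :: "'x measure \<Rightarrow> ('x \<Rightarrow> real ^ 'p) \<Rightarrow> real ^ 'p ^ 'p" where
  "cov_matrix P X = (\<chi> i j. \<integral>x. (X x $ i - mean_vec P X $ i) * (X x $ j - mean_vec P X $ j) \<partial>P)"

definition loewner_le :: "real ^ 'n ^ 'n \<Rightarrow> real ^ 'n ^ 'n \<Rightarrow> bool" where
  "loewner_le A B \<longleftrightarrow> (\<forall>v. 0 \<le> v \<bullet> ((B - A) *v v))"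

end

theory Submission
  imports Defs
begin

text \<open>
  For a fixed x, \<open>thetaG x\<close> is the Q-mean of \<open>g \<mapsto> theta (act g x)\<close>, so Jensen's
  inequality over Q gives \<open>L (thetaG x) \<le> \<integral>g. L (theta (act g x)) \<partial>Q\<close> for every convex L.
  Integrating over P, Fubini and the invariance \<open>act g X \<sim> X\<close> turn the right-hand side into
  \<open>\<integral>x. L (theta x) \<partial>P\<close>; the same computation with L the identity shows that
  augmentation preserves the mean. The mean squared error and the Loewner comparison are the
  special cases \<open>L y = \<parallel>y - theta0\<parallel>\<^sup>2\<close> and \<open>L y = (v \<bullet> (y - \<bbbE> theta))\<^sup>2\<close>.
  Jensen's inequality for vector-valued estimators rests on a subgradient of L, obtained by
  separating \<open>(z, L z)\<close> from the strict epigraph of L.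
\<close>

lemma convex_strict_epigraph:
  fixes f :: "'a::real_vector \<Rightarrow> real"
  assumes "convex_on UNIV f"
  shows "convex {p. f (fst p) < snd p}"
proof -
  have "{p. f (fst p) < snd p} = (\<Union>e\<in>epigraph UNIV f. \<Union>d\<in>{0} \<times> {0<..}. {e + d})"
  proof (intro equalityI subsetI)
    fix p :: "'a \<times> real"
    assume "p \<in> {p. f (fst p) < snd p}"
    then have "(fst p, f (fst p)) \<in> epigraph UNIV f" "(0, snd p - f (fst p)) \<in> {0} \<times> {0<..}"
      by (auto simp: mem_epigraph)
    moreover have "p = (fst p, f (fst p)) + (0, snd p - f (fst p))" by simp
    ultimately show "p \<in> (\<Union>e\<in>epigraph UNIV f. \<Union>d\<in>{0} \<times> {0<..}. {e + d})" by blast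
  qed (auto simp: epigraph_def)
  then show ?thesis
    using convex_sums[OF convex_epigraphI[OF assms] convex_Times] by simp
qed

lemma convex_on_UNIV_subgradient:
  fixes f :: "'a::euclidean_space \<Rightarrow> real"
  assumes "convex_on UNIV f"
  obtains c where "\<And>y. f z + c \<bullet> (y - z) \<le> f y"
proof -
  obtain a b where "a \<noteq> 0" and below: "a \<bullet> (z, f z) \<le> b"
    and above: "\<And>p. f (fst p) < snd p \<Longrightarrow> b \<le> a \<bullet> p"
    using separating_hyperplane_sets[OF convex_singleton convex_strict_epigraph[OF assms],
        of "(z, f z)"] by fastforce
  obtain c s where a: "a = (c, s)" by fastforce
  have support: "c \<bullet> z + s * f z \<le> c \<bullet> y + s * t" if "f y < t" for y t
    using below above[of "(y, t)"] that by (simp add: a)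
  have "s \<noteq> 0"
  proof
    assume "s = 0"
    then have "c \<noteq> 0" using \<open>a \<noteq> 0\<close> by (simp add: a zero_prod_def)
    moreover have "c \<bullet> c \<le> 0"
      using support[of "z - c" "f (z - c) + 1"] \<open>s = 0\<close> by (simp add: inner_diff_right)
    ultimately show False
      using inner_gt_zero_iff[of c] by linarith
  qed
  moreover have "0 \<le> s" using support[of z "f z + 1"] by (simp add: distrib_left)
  ultimately have "0 < s" by simp
  show ?thesis
  proof (rule that[of "- (1 / s) *\<^sub>R c"])
    fix y
    have "(c \<bullet> z - c \<bullet> y) / s + f z \<le> f y"
    proof (rule dense_ge)
      fix t assume "f y < t"
      then show "(c \<bullet> z - c \<bullet> y) / s + f z \<le> t"
        using support[of y t] \<open>0 < s\<close> by (simp add: field_simps)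
    qed
    then show "f z + (- (1 / s) *\<^sub>R c) \<bullet> (y - z) \<le> f y"
      using \<open>0 < s\<close> by (simp add: inner_diff_right diff_divide_distrib)
  qed
qed

lemma (in prob_space) jensens_inequality_euclidean:
  fixes X :: "'a \<Rightarrow> 'b::euclidean_space" and f :: "'b \<Rightarrow> real"
  assumes f: "convex_on UNIV f" and X: "integrable M X" and fX: "integrable M (\<lambda>x. f (X x))"
  shows "f (expectation X) \<le> expectation (\<lambda>x. f (X x))"
proof -
  obtain c where c: "\<And>y. f (expectation X) + c \<bullet> (y - expectation X) \<le> f y"
    using convex_on_UNIV_subgradient[OF f] by blast
  have "f (expectation X) = expectation (\<lambda>x. f (expectation X) + c \<bullet> (X x - expectation X))"
    using X by (simp add: prob_space inner_diff_right)
  also have "\<dots> \<le> expectation (\<lambda>x. f (X x))"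
    using X fX c by (intro integral_mono) auto
  finally show ?thesis .
qed

lemma integrable_real_between:
  fixes f :: "'a \<Rightarrow> real"
  assumes "integrable M l" "integrable M u" "f \<in> borel_measurable M"
    and "AE x in M. l x \<le> f x \<and> f x \<le> u x"
  shows "integrable M f"
proof (rule Bochner_Integration.integrable_bound)
  show "integrable M (\<lambda>x. \<bar>l x\<bar> + \<bar>u x\<bar>)"
    using assms(1,2) by simp
  show "AE x in M. norm (f x) \<le> norm (\<bar>l x\<bar> + \<bar>u x\<bar>)"
    using assms(4) by eventually_elim auto
qed fact

lemma convex_on_norm_linear_diff_square:
  fixes L :: "'a::real_vector \<Rightarrow> 'b::real_normed_vector"
  assumes "linear L"
  shows "convex_on UNIV (\<lambda>y. (norm (L y - c))\<^sup>2)"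
proof (rule convex_onI)
  fix t :: real and x y :: 'a
  assume t: "0 < t" "t < 1"
  let ?z = "(1 - t) *\<^sub>R x + t *\<^sub>R y"
  have "L ?z - c = (1 - t) *\<^sub>R (L x - c) + t *\<^sub>R (L y - c)"
    by (simp only: linear_add[OF assms] linear_scale[OF assms]) (simp add: algebra_simps)
  then have "norm (L ?z - c) \<le> (1 - t) * norm (L x - c) + t * norm (L y - c)"
    using t norm_triangle_ineq[of "(1 - t) *\<^sub>R (L x - c)" "t *\<^sub>R (L y - c)"] by simp
  then have "(norm (L ?z - c))\<^sup>2 \<le> ((1 - t) * norm (L x - c) + t * norm (L y - c))\<^sup>2"
    by (simp add: power_mono)
  also have "\<dots> \<le> (1 - t) * (norm (L x - c))\<^sup>2 + t * (norm (L y - c))\<^sup>2"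
    using convex_onD[OF convex_power2] t by simp
  finally show "(norm (L ?z - c))\<^sup>2 \<le> (1 - t) * (norm (L x - c))\<^sup>2 + t * (norm (L y - c))\<^sup>2" .
qed simp

lemma convex_on_norm_diff_square:
  fixes c :: "'a::real_normed_vector"
  shows "convex_on UNIV (\<lambda>y. (norm (y - c))\<^sup>2)"
  using convex_on_norm_linear_diff_square[OF linear_ident] .

lemma convex_on_inner_diff_square:
  fixes v c :: "'a::real_inner"
  shows "convex_on UNIV (\<lambda>y. (v \<bullet> (y - c))\<^sup>2)"
  using convex_on_norm_linear_diff_square[OF bounded_linear.linear[OF bounded_linear_inner_right],
      of v "v \<bullet> c"]
  by (simp add: inner_diff_right)

lemma (in finite_measure) integrable_norm_diff_square:
  fixes Y :: "'a \<Rightarrow> 'b::{banach, second_countable_topology}"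
  assumes Y: "Y \<in> borel_measurable M" and sq: "integrable M (\<lambda>x. (norm (Y x))\<^sup>2)"
  shows "integrable M (\<lambda>x. (norm (Y x - c))\<^sup>2)"
proof (rule Bochner_Integration.integrable_bound)
  show "integrable M (\<lambda>x. 2 * (norm (Y x))\<^sup>2 + 2 * (norm c)\<^sup>2)"
    using sq by simp
  show "(\<lambda>x. (norm (Y x - c))\<^sup>2) \<in> borel_measurable M"
    using Y by measurable
  have "(norm (Y x - c))\<^sup>2 \<le> 2 * (norm (Y x))\<^sup>2 + 2 * (norm c)\<^sup>2" for x
  proof -
    have "(norm (Y x - c))\<^sup>2 \<le> (norm (Y x) + norm c)\<^sup>2"
      by (simp add: power_mono norm_triangle_ineq4)
    also have "\<dots> \<le> 2 * (norm (Y x))\<^sup>2 + 2 * (norm c)\<^sup>2"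
      using zero_le_power2[of "norm (Y x) - norm c"] by (simp add: power2_diff power2_sum)
    finally show ?thesis .
  qed
  then show "AE x in M. norm ((norm (Y x - c))\<^sup>2) \<le> norm (2 * (norm (Y x))\<^sup>2 + 2 * (norm c)\<^sup>2)"
    by simp
qed

lemma (in finite_measure) square_norm_integrable_imp_integrable:
  fixes f :: "'a \<Rightarrow> 'b::{banach, second_countable_topology}"
  assumes f: "f \<in> borel_measurable M" and sq: "integrable M (\<lambda>x. (norm (f x))\<^sup>2)"
  shows "integrable M f"
  using square_integrable_imp_integrable[of "\<lambda>x. norm (f x)"] f sq integrable_norm_iff by auto

lemma cov_matrix_quadratic_form:
  fixes Y :: "'a \<Rightarrow> real ^ 'p"
  assumes Y: "Y \<in> borel_measurable M"
    and sq: "integrable M (\<lambda>x. (norm (Y x - mean_vec M Y))\<^sup>2)"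
  shows "v \<bullet> (cov_matrix M Y *v v) = (\<integral>x. (v \<bullet> (Y x - mean_vec M Y))\<^sup>2 \<partial>M)"
proof -
  define m where "m = mean_vec M Y"
  define D where "D x = Y x - m" for x
  have D: "D \<in> borel_measurable M"
    unfolding D_def[abs_def] using Y by measurable
  have entries: "integrable M (\<lambda>x. D x $ i * D x $ j)" for i j
  proof (rule Bochner_Integration.integrable_bound[OF sq])
    show "(\<lambda>x. D x $ i * D x $ j) \<in> borel_measurable M"
      using measurable_compose[OF D borel_measurable_nth] by measurable
    have "\<bar>D x $ i\<bar> * \<bar>D x $ j\<bar> \<le> norm (D x) * norm (D x)" for x
      by (intro mult_mono) (auto simp: component_le_norm_cart)
    then show "AE x in M. norm (D x $ i * D x $ j) \<le> norm ((norm (Y x - mean_vec M Y))\<^sup>2)"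
      by (simp add: D_def m_def abs_mult power2_eq_square)
  qed
  have "(\<integral>x. (v \<bullet> D x)\<^sup>2 \<partial>M) = (\<integral>x. (\<Sum>i\<in>UNIV. \<Sum>j\<in>UNIV. v $ i * v $ j * (D x $ i * D x $ j)) \<partial>M)"
    by (simp add: inner_vec_def power2_eq_square sum_product mult_ac)
  also have "\<dots> = (\<Sum>i\<in>UNIV. \<Sum>j\<in>UNIV. v $ i * v $ j * (\<integral>x. D x $ i * D x $ j \<partial>M))"
    using entries by simp
  also have "\<dots> = v \<bullet> (cov_matrix M Y *v v)"
    by (simp add: inner_vec_def matrix_vector_mult_def cov_matrix_def D_def m_def sum_distrib_left mult_ac)
  finally show ?thesis by (simp add: D_def m_def)
qed

lemma loewner_leI:
  assumes "\<And>v. v \<bullet> (A *v v) \<le> v \<bullet> (B *v v)"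
  shows "loewner_le A B"
  using assms by (simp add: loewner_le_def matrix_vector_mult_diff_rdistrib inner_diff_right)

locale invariant_action = pair_prob_space P Q
  for P :: "'x measure" and Q :: "'g measure" +
  fixes act :: "'g \<Rightarrow> 'x \<Rightarrow> 'x"
  assumes act_measurable: "(\<lambda>(g, x). act g x) \<in> Q \<Otimes>\<^sub>M P \<rightarrow>\<^sub>M P"
    and distr_act: "AE g in Q. distr P P (act g) = P"
begin

definition orbit_average :: "('x \<Rightarrow> 'b::{banach, second_countable_topology}) \<Rightarrow> 'x \<Rightarrow> 'b" where
  "orbit_average h x = (\<integral>g. h (act g x) \<partial>Q)"

lemma measurable_act: "g \<in> space Q \<Longrightarrow> act g \<in> P \<rightarrow>\<^sub>M P"
  using measurable_Pair2[OF act_measurable] by simp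

lemma measurable_orbit:
  assumes "h \<in> P \<rightarrow>\<^sub>M N"
  shows "(\<lambda>(x, g). h (act g x)) \<in> P \<Otimes>\<^sub>M Q \<rightarrow>\<^sub>M N"
  using measurable_compose[OF measurable_pair_swap[OF act_measurable] assms]
  by (simp add: case_prod_unfold)

lemma AE_nn_integral_act:
  assumes "h \<in> borel_measurable P"
  shows "AE g in Q. (\<integral>\<^sup>+x. h (act g x) \<partial>P) = (\<integral>\<^sup>+x. h x \<partial>P)"
  using distr_act AE_space
proof eventually_elim
  case (elim g)
  have "h \<in> borel_measurable (distr P P (act g))"
    using assms by simp
  from nn_integral_distr[OF measurable_act[OF elim(2)] this] show ?case
    using elim(1) by simp
qed

lemma AE_integral_act:
  fixes h :: "'x \<Rightarrow> 'b::{banach, second_countable_topology}"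
  assumes "h \<in> borel_measurable P"
  shows "AE g in Q. (\<integral>x. h (act g x) \<partial>P) = (\<integral>x. h x \<partial>P)"
  using distr_act AE_space
proof eventually_elim
  case (elim g)
  have "(\<integral>x. h (act g x) \<partial>P) = (\<integral>x. h x \<partial>distr P P (act g))"
    by (rule integral_distr[OF measurable_act[OF elim(2)] assms, symmetric])
  then show ?case
    using elim(1) by simp
qed

lemma nn_integral_orbit:
  assumes h: "h \<in> borel_measurable P"
  shows "(\<integral>\<^sup>+(x, g). h (act g x) \<partial>(P \<Otimes>\<^sub>M Q)) = (\<integral>\<^sup>+x. h x \<partial>P)"
proof -
  have "(\<integral>\<^sup>+(x, g). h (act g x) \<partial>(P \<Otimes>\<^sub>M Q)) = (\<integral>\<^sup>+g. (\<integral>\<^sup>+x. h (act g x) \<partial>P) \<partial>Q)"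
    using nn_integral_snd[OF measurable_orbit[OF h]] by simp
  also have "\<dots> = (\<integral>\<^sup>+g. (\<integral>\<^sup>+x. h x \<partial>P) \<partial>Q)"
    using AE_nn_integral_act[OF h] by (rule nn_integral_cong_AE)
  also have "\<dots> = (\<integral>\<^sup>+x. h x \<partial>P)"
    by (simp add: M2.emeasure_space_1)
  finally show ?thesis .
qed

lemma integrable_orbit_iff:
  fixes h :: "'x \<Rightarrow> 'b::{banach, second_countable_topology}"
  assumes h: "h \<in> borel_measurable P"
  shows "integrable (P \<Otimes>\<^sub>M Q) (\<lambda>(x, g). h (act g x)) \<longleftrightarrow> integrable P h"
  using nn_integral_orbit[of "\<lambda>x. ennreal (norm (h x))"] measurable_orbit[OF h] h
  by (simp add: integrable_iff_bounded case_prod_unfold)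

lemma
  fixes h :: "'x \<Rightarrow> 'b::{banach, second_countable_topology}"
  assumes h: "integrable P h"
  shows AE_integrable_orbit: "AE x in P. integrable Q (\<lambda>g. h (act g x))"
    and integrable_orbit_average: "integrable P (orbit_average h)"
    and integral_orbit_average: "integral\<^sup>L P (orbit_average h) = integral\<^sup>L P h"
proof -
  have orbit: "integrable (P \<Otimes>\<^sub>M Q) (\<lambda>(x, g). h (act g x))"
    using h by (simp add: integrable_orbit_iff)
  show "AE x in P. integrable Q (\<lambda>g. h (act g x))"
    using AE_integrable_fst[OF orbit] .
  show "integrable P (orbit_average h)"
    using integrable_fst[OF orbit] by (simp add: orbit_average_def[abs_def])
  have "integral\<^sup>L P (orbit_average h) = (\<integral>g. (\<integral>x. h (act g x) \<partial>P) \<partial>Q)"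
    using Fubini_integral[OF orbit] by (simp add: orbit_average_def[abs_def])
  also have "\<dots> = (\<integral>g. integral\<^sup>L P h \<partial>Q)"
    using AE_integral_act[OF borel_measurable_integrable[OF h]]
      borel_measurable_integrable[OF integrable_snd[OF orbit]]
    by (intro integral_cong_AE) simp_all
  also have "\<dots> = integral\<^sup>L P h"
    by (simp add: M2.prob_space)
  finally show "integral\<^sup>L P (orbit_average h) = integral\<^sup>L P h" .
qed

lemma convex_orbit_average_le:
  fixes h :: "'x \<Rightarrow> 'v::euclidean_space" and f :: "'v \<Rightarrow> real"
  assumes f: "convex_on UNIV f" and h: "integrable P h" and fh: "integrable P (\<lambda>x. f (h x))"
  shows "integrable P (\<lambda>x. f (orbit_average h x))"
    and "(\<integral>x. f (orbit_average h x) \<partial>P) \<le> (\<integral>x. f (h x) \<partial>P)"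
proof -
  obtain c where c: "\<And>y. f 0 + c \<bullet> y \<le> f y"
    using convex_on_UNIV_subgradient[OF f, where z = 0] by auto
  have jensen: "AE x in P. f (orbit_average h x) \<le> orbit_average (\<lambda>x. f (h x)) x"
    using AE_integrable_orbit[OF h] AE_integrable_orbit[OF fh]
    by eventually_elim (simp add: orbit_average_def M2.jensens_inequality_euclidean[OF f])
  have bounds: "AE x in P. f 0 + c \<bullet> orbit_average h x \<le> f (orbit_average h x)
      \<and> f (orbit_average h x) \<le> orbit_average (\<lambda>x. f (h x)) x"
    using jensen by eventually_elim (simp add: c)
  have "(\<lambda>x. f (orbit_average h x)) \<in> borel_measurable P"
    using borel_measurable_integrable[OF integrable_orbit_average[OF h]]
      convex_on_continuous[OF open_UNIV f]
    by (simp add: borel_measurable_continuous_on)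
  moreover have "integrable P (\<lambda>x. f 0 + c \<bullet> orbit_average h x)"
    using integrable_orbit_average[OF h] by simp
  ultimately show int: "integrable P (\<lambda>x. f (orbit_average h x))"
    using integrable_real_between[OF _ integrable_orbit_average[OF fh] _ bounds] by blast
  have "(\<integral>x. f (orbit_average h x) \<partial>P) \<le> integral\<^sup>L P (orbit_average (\<lambda>x. f (h x)))"
    using jensen int integrable_orbit_average[OF fh] by (intro integral_mono_AE) auto
  then show "(\<integral>x. f (orbit_average h x) \<partial>P) \<le> (\<integral>x. f (h x) \<partial>P)"
    using integral_orbit_average[OF fh] by simp
qed

lemma mean_vec_orbit_average:
  "integrable P h \<Longrightarrow> mean_vec P (orbit_average h) = mean_vec P h"
  by (simp add: mean_vec_def integral_orbit_average)

lemma loewner_le_cov_matrix_orbit_average: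
  fixes h :: "'x \<Rightarrow> real ^ 'p"
  assumes h: "h \<in> borel_measurable P" and sq: "integrable P (\<lambda>x. (norm (h x))\<^sup>2)"
  shows "loewner_le (cov_matrix P (orbit_average h)) (cov_matrix P h)"
proof (rule loewner_leI)
  fix v :: "real ^ 'p"
  define m where "m = mean_vec P h"
  have int: "integrable P h"
    using M1.square_norm_integrable_imp_integrable[OF h sq] .
  have sq_m: "integrable P (\<lambda>x. (norm (h x - m))\<^sup>2)"
    using M1.integrable_norm_diff_square[OF h sq] .
  have "integrable P (\<lambda>x. (v \<bullet> (h x - m))\<^sup>2)"
  proof (rule Bochner_Integration.integrable_bound)
    show "integrable P (\<lambda>x. (norm v)\<^sup>2 * (norm (h x - m))\<^sup>2)"
      using sq_m by simp
    show "(\<lambda>x. (v \<bullet> (h x - m))\<^sup>2) \<in> borel_measurable P"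
      using h by measurable
    have "\<bar>v \<bullet> (h x - m)\<bar>\<^sup>2 \<le> (norm v * norm (h x - m))\<^sup>2" for x
      by (rule power_mono[OF Cauchy_Schwarz_ineq2 abs_ge_zero])
    then show "AE x in P. norm ((v \<bullet> (h x - m))\<^sup>2) \<le> norm ((norm v)\<^sup>2 * (norm (h x - m))\<^sup>2)"
      by (simp add: power_mult_distrib)
  qed
  then have "(\<integral>x. (v \<bullet> (orbit_average h x - m))\<^sup>2 \<partial>P) \<le> (\<integral>x. (v \<bullet> (h x - m))\<^sup>2 \<partial>P)"
    using convex_orbit_average_le(2)[OF convex_on_inner_diff_square int] by simp
  moreover have "v \<bullet> (cov_matrix P (orbit_average h) *v v) = (\<integral>x. (v \<bullet> (orbit_average h x - m))\<^sup>2 \<partial>P)"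
    using cov_matrix_quadratic_form[OF borel_measurable_integrable[OF integrable_orbit_average[OF int]]]
      convex_orbit_average_le(1)[OF convex_on_norm_diff_square int sq_m]
    by (simp add: mean_vec_orbit_average[OF int] m_def)
  moreover have "v \<bullet> (cov_matrix P h *v v) = (\<integral>x. (v \<bullet> (h x - m))\<^sup>2 \<partial>P)"
    using cov_matrix_quadratic_form[OF h] sq_m by (simp add: m_def)
  ultimately show "v \<bullet> (cov_matrix P (orbit_average h) *v v) \<le> v \<bullet> (cov_matrix P h *v v)"
    by simp
qed

end

theorem proposition4p2:
  fixes G :: "('g, 'b) monoid_scheme" and T :: "'g topology" and Q :: "'g measure"
    and P :: "'x measure" and act :: "'g \<Rightarrow> 'x \<Rightarrow> 'x"
    and theta :: "'x \<Rightarrow> real ^ 'p" and theta0 :: "real ^ 'p"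
  assumes grp: "compact_topological_group G T"
    and haar: "haar_probability G T Q"
    and P: "prob_space P"
    and action: "measurable_group_action G Q P act"
    and inv: "AE g in Q. distr P P (act g) = P"
    and theta_meas: "theta \<in> borel_measurable P"
    and L2_meas: "(\<lambda>(x, g). theta (act g x)) \<in> borel_measurable (P \<Otimes>\<^sub>M Q)"
    and L2: "integrable (P \<Otimes>\<^sub>M Q) (\<lambda>(x, g). (norm (theta (act g x)))\<^sup>2)"
  defines "thetaG \<equiv> (\<lambda>x. \<integral>g. theta (act g x) \<partial>Q)"
  shows "mean_vec P thetaG - theta0 = mean_vec P theta - theta0 \<and>
         loewner_le (cov_matrix P thetaG) (cov_matrix P theta) \<and>
         (\<integral>x. (norm (thetaG x - theta0))\<^sup>2 \<partial>P) \<le> (\<integral>x. (norm (theta x - theta0))\<^sup>2 \<partial>P) \<and>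
         (\<forall>L :: real ^ 'p \<Rightarrow> real ^ 'p \<Rightarrow> real.
           convex_on UNIV (L theta0) \<longrightarrow> integrable P (\<lambda>x. L theta0 (theta x)) \<longrightarrow>
           integrable P (\<lambda>x. L theta0 (thetaG x)) \<and>
           (\<integral>x. L theta0 (thetaG x) \<partial>P) \<le> (\<integral>x. L theta0 (theta x) \<partial>P))"
proof -
  have "prob_space Q" and "(\<lambda>(g, x). act g x) \<in> Q \<Otimes>\<^sub>M P \<rightarrow>\<^sub>M P"
    using haar action by (simp_all add: haar_probability_def measurable_group_action_def)
  then interpret invariant_action P Q act
    using P inv
    by (simp add: invariant_action_def invariant_action_axioms_def pair_prob_space_def
        pair_sigma_finite_def prob_space_imp_sigma_finite)
  have thetaG: "thetaG = orbit_average theta"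
    unfolding thetaG_def orbit_average_def ..
  have sq: "integrable P (\<lambda>x. (norm (theta x))\<^sup>2)"
    using L2 integrable_orbit_iff[of "\<lambda>x. (norm (theta x))\<^sup>2"] theta_meas by simp
  have int: "integrable P theta"
    using M1.square_norm_integrable_imp_integrable[OF theta_meas sq] .
  have "(\<integral>x. (norm (thetaG x - theta0))\<^sup>2 \<partial>P) \<le> (\<integral>x. (norm (theta x - theta0))\<^sup>2 \<partial>P)"
    using convex_orbit_average_le(2)[OF convex_on_norm_diff_square int
        M1.integrable_norm_diff_square[OF theta_meas sq]]
    by (simp add: thetaG)
  then show ?thesis
    using mean_vec_orbit_average[OF int] loewner_le_cov_matrix_orbit_average[OF theta_meas sq]
      convex_orbit_average_le[OF _ int]
    by (simp add: thetaG)
qed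

end
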